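(* Let $\Bbbk$ be a field, $R=\Bbbk[x_1,\dots,x_m]$ with the standard $\mathbb Z^m$-grading, $M$ a finitely generated torsion-free $\mathbb Z^m$-graded $R$-module, and $\mathcal F_\bullet$ a minimal $\mathbb Z^m$-graded free resolution of $M$. Let $C$ be any basis of $F_0$ consisting of homogeneous elements. Then $\mathcal F_\bullet$ has a basis with minimal support $B=\coprod B_n$ consisting of homogeneous elements and such that $B_0=C$.
   Context: For a complex of free modules $\mathcal F_\bullet$ with differentials $f_n$, $f_0\colon F_0\to H_0(\mathcal F_\bullet)$ the canonical projection, and bases $B_n$ of $F_n$, $B=\coprod B_n$: the support of $y=\sum_{c\in B_n}a_cc$ is $\{c\in B_n:a_c\ne0\}$; $y$ is a cycle with minimal support if $y\in\operatorname{Ker}f_n$ and $\operatorname{supp}y$ does not properly contain the support of any nonzero element of $\operatorname{Ker}f_n$; $B$ is a basis with minimal support if $f_n(b)$ is a cycle with minimal support for all $n\ge1$ and $b\in B_n$. A $\mathbb Z^m$-graded free resolution is minimal if its differentials are homogeneous of degree $0$ and $f_n(F_n)\subseteq(x_1,\dots,x_m)F_{n-1}$ for $n\ge1$. *)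

theory Defs
  imports "HOL-Library.Poly_Mapping" "HOL-Library.Function_Algebras"
begin

text \<open>The polynomial ring R = k[x_v | v in 'v] with a finite variable type 'v
  (so m = CARD('v)); monomials are exponent vectors 'v =>0 nat.\<close>

type_synonym ('v, 'k) pring = "('v \<Rightarrow>\<^sub>0 nat) \<Rightarrow>\<^sub>0 'k"

definition var :: "'v \<Rightarrow> ('v, 'k::field) pring" where
  "var i = Poly_Mapping.single (Poly_Mapping.single i 1) 1"

definition mdeg :: "('v \<Rightarrow>\<^sub>0 nat) \<Rightarrow> ('v \<Rightarrow> int)" where
  "mdeg mu = (\<lambda>i. int (Poly_Mapping.lookup mu i))"

text \<open>Graded free module F_n = R(-deg n 0) + ... + R(-deg n (r n - 1)),
  elements are coordinate vectors nat => R vanishing from index r n on.\<close>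

definition Fmod :: "(nat \<Rightarrow> nat) \<Rightarrow> nat \<Rightarrow> (nat \<Rightarrow> ('v, 'k::field) pring) set" where
  "Fmod r n = {v. \<forall>j\<ge>r n. v j = 0}"

definition homog_of :: "(nat \<Rightarrow> nat) \<Rightarrow> (nat \<Rightarrow> nat \<Rightarrow> ('v \<Rightarrow> int)) \<Rightarrow> nat
    \<Rightarrow> ('v \<Rightarrow> int) \<Rightarrow> (nat \<Rightarrow> ('v, 'k::field) pring) \<Rightarrow> bool" where
  "homog_of r deg n a v \<longleftrightarrow> v \<in> Fmod r n \<and>
     (\<forall>j<r n. \<forall>mu\<in>Poly_Mapping.keys (v j). (\<lambda>i. mdeg mu i + deg n j i) = a)"

definition homog :: "(nat \<Rightarrow> nat) \<Rightarrow> (nat \<Rightarrow> nat \<Rightarrow> ('v \<Rightarrow> int)) \<Rightarrow> nat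
    \<Rightarrow> (nat \<Rightarrow> ('v, 'k::field) pring) \<Rightarrow> bool" where
  "homog r deg n v \<longleftrightarrow> (\<exists>a. homog_of r deg n a v)"

text \<open>The differential f_n : F_n -> F_(n-1) (n >= 1), an R-linear map, given by
  its matrix A n (rows indexed by basis of F_(n-1), columns by basis of F_n).\<close>
definition dif :: "(nat \<Rightarrow> nat) \<Rightarrow> (nat \<Rightarrow> nat \<Rightarrow> nat \<Rightarrow> ('v, 'k::field) pring) \<Rightarrow> nat
    \<Rightarrow> (nat \<Rightarrow> ('v, 'k) pring) \<Rightarrow> (nat \<Rightarrow> ('v, 'k) pring)" where
  "dif r A n v = (\<lambda>i. if i < r (n - 1) then (\<Sum>j<r n. A n i j * v j) else 0)"

text \<open>Ker f_n; for n = 0, f_0 is the projection F_0 -> H_0 = F_0 / Im f_1,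
  whose kernel is Im f_1.\<close>
definition kerf :: "(nat \<Rightarrow> nat) \<Rightarrow> (nat \<Rightarrow> nat \<Rightarrow> nat \<Rightarrow> ('v, 'k::field) pring) \<Rightarrow> nat
    \<Rightarrow> (nat \<Rightarrow> ('v, 'k) pring) set" where
  "kerf r A n = (if n = 0 then dif r A 1 ` Fmod r 1
                 else {v \<in> Fmod r n. dif r A n v = 0})"

definition smul :: "('v, 'k::field) pring \<Rightarrow> (nat \<Rightarrow> ('v, 'k) pring) \<Rightarrow> (nat \<Rightarrow> ('v, 'k) pring)" where
  "smul s v = (\<lambda>j. s * v j)"

definition in_maxF :: "(nat \<Rightarrow> nat) \<Rightarrow> nat \<Rightarrow> (nat \<Rightarrow> ('v::finite, 'k::field) pring) \<Rightarrow> bool" where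
  "in_maxF r n v \<longleftrightarrow> (\<exists>w :: 'v \<Rightarrow> (nat \<Rightarrow> ('v, 'k) pring).
      (\<forall>i. w i \<in> Fmod r n) \<and> v = (\<lambda>k. \<Sum>i\<in>UNIV. var i * w i k))"

text \<open>Minimal Z^m-graded free resolution of H_0 = F_0 / Im f_1 (= M).\<close>
definition min_graded_free_resolution ::
  "(nat \<Rightarrow> nat) \<Rightarrow> (nat \<Rightarrow> nat \<Rightarrow> ('v::finite \<Rightarrow> int)) \<Rightarrow> (nat \<Rightarrow> nat \<Rightarrow> nat \<Rightarrow> ('v, 'k::field) pring) \<Rightarrow> bool" where
  "min_graded_free_resolution r deg A \<longleftrightarrow>
     (\<forall>n\<ge>1. \<forall>a v. homog_of r deg n a v \<longrightarrow> homog_of r deg (n - 1) a (dif r A n v)) \<and>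
     (\<forall>n\<ge>1. kerf r A n = dif r A (n + 1) ` Fmod r (n + 1)) \<and>
     (\<forall>n\<ge>1. \<forall>v\<in>Fmod r n. in_maxF r (n - 1) (dif r A n v))"

definition H0_torsion_free :: "(nat \<Rightarrow> nat) \<Rightarrow> (nat \<Rightarrow> nat \<Rightarrow> nat \<Rightarrow> ('v, 'k::field) pring) \<Rightarrow> bool" where
  "H0_torsion_free r A \<longleftrightarrow>
     (\<forall>s v. v \<in> Fmod r 0 \<longrightarrow> smul s v \<in> kerf r A 0 \<longrightarrow> s = 0 \<or> v \<in> kerf r A 0)"

definition is_coord :: "(nat \<Rightarrow> ('v, 'k::field) pring) set \<Rightarrow> (nat \<Rightarrow> ('v, 'k) pring)
    \<Rightarrow> ((nat \<Rightarrow> ('v, 'k) pring) \<Rightarrow> ('v, 'k) pring) \<Rightarrow> bool" where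
  "is_coord B v a \<longleftrightarrow> (\<forall>c. c \<notin> B \<longrightarrow> a c = 0) \<and> finite {c. a c \<noteq> 0} \<and>
      v = (\<lambda>k. \<Sum>c\<in>{c. a c \<noteq> 0}. a c * c k)"

definition is_basis :: "(nat \<Rightarrow> ('v, 'k::field) pring) set \<Rightarrow> (nat \<Rightarrow> ('v, 'k) pring) set \<Rightarrow> bool" where
  "is_basis F B \<longleftrightarrow> B \<subseteq> F \<and> (\<forall>v\<in>F. \<exists>!a. is_coord B v a)"

definition coord :: "(nat \<Rightarrow> ('v, 'k::field) pring) set \<Rightarrow> (nat \<Rightarrow> ('v, 'k) pring)
    \<Rightarrow> (nat \<Rightarrow> ('v, 'k) pring) \<Rightarrow> ('v, 'k) pring" where
  "coord B v = (THE a. is_coord B v a)"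

definition supp :: "(nat \<Rightarrow> ('v, 'k::field) pring) set \<Rightarrow> (nat \<Rightarrow> ('v, 'k) pring)
    \<Rightarrow> (nat \<Rightarrow> ('v, 'k) pring) set" where
  "supp B y = {c \<in> B. coord B y c \<noteq> 0}"

definition cycle_min_supp :: "(nat \<Rightarrow> nat) \<Rightarrow> (nat \<Rightarrow> nat \<Rightarrow> nat \<Rightarrow> ('v, 'k::field) pring)
    \<Rightarrow> (nat \<Rightarrow> (nat \<Rightarrow> ('v, 'k) pring) set) \<Rightarrow> nat \<Rightarrow> (nat \<Rightarrow> ('v, 'k) pring) \<Rightarrow> bool" where
  "cycle_min_supp r A B n y \<longleftrightarrow> y \<in> kerf r A n \<and>
     \<not> (\<exists>z\<in>kerf r A n. z \<noteq> 0 \<and> supp (B n) z \<subset> supp (B n) y)"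

definition basis_min_supp :: "(nat \<Rightarrow> nat) \<Rightarrow> (nat \<Rightarrow> nat \<Rightarrow> nat \<Rightarrow> ('v, 'k::field) pring)
    \<Rightarrow> (nat \<Rightarrow> (nat \<Rightarrow> ('v, 'k) pring) set) \<Rightarrow> bool" where
  "basis_min_supp r A B \<longleftrightarrow> (\<forall>n. is_basis (Fmod r n) (B n)) \<and>
     (\<forall>n\<ge>1. \<forall>b\<in>B n. cycle_min_supp r A B (n - 1) (dif r A n b))"

end

theory Submission
  imports Defs
begin

text \<open>Bases with minimal support are built one homological degree at a time. Given a
  homogeneous basis \<open>B\<close> of \<open>F\<^sub>m\<close>, start from the standard basis of \<open>F\<^sub>m\<^sub>+\<^sub>1\<close> and, while
  some basis element \<open>e\<close> has a boundary \<open>f e\<close> without minimal support, replace \<open>e\<close> by a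
  homogeneous element whose boundary has strictly smaller support; the total size of the
  supports decreases, so this stops.

  In the fine \<open>\<int>\<^sup>m\<close>-grading a homogeneous polynomial is a single term, so all coordinates of a
  homogeneous vector in a homogeneous basis are terms. A boundary \<open>z\<close> with smaller support
  than \<open>f e\<close> is first made homogeneous of the degree of \<open>e\<close>: take a nonzero homogeneous
  component of \<open>z\<close>, cancel one of its coordinates against \<open>f e\<close>, and divide out the monomial
  factor that remains. The quotient is again a boundary because boundaries are saturated:
  in degree \<open>0\<close> since \<open>H\<^sub>0\<close> is torsion-free, above since they are kernels of maps into free
  modules. A homogeneous lift \<open>h\<close> of it has a constant \<open>e\<close>-coordinate; either \<open>h\<close> or
  \<open>e - \<lambda>h\<close> has a unit \<open>e\<close>-coordinate and can be exchanged for \<open>e\<close>.\<close>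

section \<open>Homogeneous polynomials\<close>

text \<open>The monomial of a given multidegree; negative entries are truncated to \<open>0\<close>, so it is
  only meaningful for \<open>0 \<le> d\<close>.\<close>

definition monom_of_mdeg :: "('v::finite \<Rightarrow> int) \<Rightarrow> ('v \<Rightarrow>\<^sub>0 nat)" where
  "monom_of_mdeg d = Abs_poly_mapping (\<lambda>i. nat (d i))"

lemma lookup_monom_of_mdeg: "Poly_Mapping.lookup (monom_of_mdeg d) = (\<lambda>i. nat (d i))"
  unfolding monom_of_mdeg_def by (rule lookup_Abs_poly_mapping) simp

lemma mdeg_nonneg: "0 \<le> mdeg mu"
  by (simp add: le_fun_def mdeg_def)

lemma mdeg_add: "mdeg (mu + nu) = mdeg mu + mdeg nu"
  by (simp add: mdeg_def lookup_add fun_eq_iff)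

lemma mdeg_monom_of_mdeg: "0 \<le> d \<Longrightarrow> mdeg (monom_of_mdeg d) = d"
  by (auto simp: mdeg_def lookup_monom_of_mdeg le_fun_def)

lemma monom_of_mdeg_mdeg [simp]: "monom_of_mdeg (mdeg (mu::'v::finite \<Rightarrow>\<^sub>0 nat)) = mu"
  by (rule poly_mapping_eqI) (simp add: lookup_monom_of_mdeg mdeg_def)

lemma mdeg_eq_iff: "mdeg (mu::'v::finite \<Rightarrow>\<^sub>0 nat) = d \<longleftrightarrow> 0 \<le> d \<and> mu = monom_of_mdeg d"
  using mdeg_monom_of_mdeg mdeg_nonneg by fastforce

lemma monom_of_mdeg_add:
  "0 \<le> d \<Longrightarrow> 0 \<le> e \<Longrightarrow> monom_of_mdeg (d + e) = monom_of_mdeg d + monom_of_mdeg e"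
  by (rule poly_mapping_eqI) (auto simp: lookup_add lookup_monom_of_mdeg le_fun_def nat_add_distrib)

lemma monom_of_mdeg_zero [simp]: "monom_of_mdeg (0::'v::finite \<Rightarrow> int) = 0"
  by (rule poly_mapping_eqI) (simp add: lookup_monom_of_mdeg)

definition hom_poly :: "('v \<Rightarrow> int) \<Rightarrow> ('v, 'k::field) pring \<Rightarrow> bool" where
  "hom_poly d p \<longleftrightarrow> (\<forall>mu\<in>Poly_Mapping.keys p. mdeg mu = d)"

lemma hom_poly_zero [simp]: "hom_poly d 0"
  by (simp add: hom_poly_def)

lemma hom_poly_single: "0 \<le> d \<Longrightarrow> hom_poly d (Poly_Mapping.single (monom_of_mdeg d) b)"
  by (simp add: hom_poly_def mdeg_monom_of_mdeg)

lemma hom_poly_mult: "hom_poly d p \<Longrightarrow> hom_poly e q \<Longrightarrow> hom_poly (d + e) (p * q)"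
  using keys_mult[of p q] by (auto simp: hom_poly_def mdeg_add)

lemma hom_poly_eq_single:
  assumes "hom_poly d (p::('v::finite, 'k::field) pring)"
  shows "p = Poly_Mapping.single (monom_of_mdeg d) (Poly_Mapping.lookup p (monom_of_mdeg d))"
proof (rule poly_mapping_eqI)
  fix mu
  have "mu \<in> Poly_Mapping.keys p \<Longrightarrow> mu = monom_of_mdeg d"
    using assms by (auto simp: hom_poly_def mdeg_eq_iff)
  then show "Poly_Mapping.lookup p mu =
      Poly_Mapping.lookup (Poly_Mapping.single (monom_of_mdeg d) (Poly_Mapping.lookup p (monom_of_mdeg d))) mu"
    by (cases "mu = monom_of_mdeg d") (auto simp: lookup_single in_keys_iff)
qed

lemma hom_poly_nonzero_imp_nonneg:
  assumes "hom_poly d p" "p \<noteq> 0"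
  shows "0 \<le> d"
proof -
  obtain mu where "mu \<in> Poly_Mapping.keys p" using assms(2) by fastforce
  then have "mdeg mu = d" using assms(1) by (simp add: hom_poly_def)
  then show ?thesis using mdeg_nonneg by metis
qed

lemma hom_poly_eq_monom_mult:
  assumes "hom_poly d (p::('v::finite, 'k::field) pring)" "0 \<le> e" "e \<le> d"
  shows "p = Poly_Mapping.single (monom_of_mdeg e) 1 *
             Poly_Mapping.single (monom_of_mdeg (d - e)) (Poly_Mapping.lookup p (monom_of_mdeg d))"
proof -
  have "monom_of_mdeg e + monom_of_mdeg (d - e) = monom_of_mdeg d"
    using monom_of_mdeg_add[of e "d - e"] assms(2,3) by simp
  then show ?thesis using hom_poly_eq_single[OF assms(1)] by (simp add: mult_single)
qed

lemma single_eq_zero_iff [simp]: "Poly_Mapping.single k x = 0 \<longleftrightarrow> x = 0"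
  by (metis lookup_single_eq single_zero)

lemma lookup_single_mult:
  "Poly_Mapping.lookup (Poly_Mapping.single nu b * p) (nu + mu) = b * Poly_Mapping.lookup (p::('v, 'k::field) pring) mu"
proof -
  have "Poly_Mapping.lookup (Poly_Mapping.single nu b * p) (nu + mu) =
      (\<Sum>l. (b * (\<Sum>q. Poly_Mapping.lookup p q when nu + mu = l + q)) when nu = l)"
    by (simp add: lookup_mult lookup_single when_mult)
  also have "\<dots> = b * (\<Sum>q. Poly_Mapping.lookup p q when mu = q)"
    by simp
  finally show ?thesis by simp
qed

lemma lookup_single_mult_not_dvd:
  "\<nexists>mu. k = nu + mu \<Longrightarrow> Poly_Mapping.lookup (Poly_Mapping.single nu b * (p::('v, 'k::field) pring)) k = 0"
  using keys_mult[of "Poly_Mapping.single nu b" p] by (auto simp: in_keys_iff split: if_splits)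

lemma single_mult_eq_zero_iff:
  "b \<noteq> 0 \<Longrightarrow> Poly_Mapping.single nu b * (p::('v, 'k::field) pring) = 0 \<longleftrightarrow> p = 0"
  by (metis lookup_single_mult lookup_zero mult_eq_0_iff mult_zero_right poly_mapping_eqI)

definition hom_comp :: "('v::finite \<Rightarrow> int) \<Rightarrow> ('v, 'k::field) pring \<Rightarrow> ('v, 'k) pring" where
  "hom_comp d p =
     (if 0 \<le> d then Poly_Mapping.single (monom_of_mdeg d) (Poly_Mapping.lookup p (monom_of_mdeg d)) else 0)"

lemma hom_poly_hom_comp: "hom_poly d (hom_comp d p)"
  by (simp add: hom_comp_def hom_poly_single)

lemma hom_comp_hom_poly: "hom_poly d p \<Longrightarrow> hom_comp d p = p"
  using hom_poly_eq_single hom_poly_nonzero_imp_nonneg by (fastforce simp: hom_comp_def)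

lemma hom_comp_zero [simp]: "hom_comp d 0 = 0"
  by (simp add: hom_comp_def)

lemma hom_comp_add: "hom_comp d (p + q) = hom_comp d p + hom_comp d q"
  by (simp add: hom_comp_def lookup_add single_add)

lemma hom_comp_diff: "hom_comp d (p - q) = hom_comp d p - hom_comp d q"
  by (simp add: hom_comp_def lookup_minus single_diff)

lemma hom_comp_sum: "hom_comp d (\<Sum>x\<in>S. f x) = (\<Sum>x\<in>S. hom_comp d (f x))"
  by (induction S rule: infinite_finite_induct) (auto simp: hom_comp_add)

lemma hom_comp_single_mult:
  "hom_comp d (Poly_Mapping.single nu b * p) =
     Poly_Mapping.single nu b * hom_comp (d - mdeg nu) (p::('v::finite, 'k::field) pring)"
proof (cases "0 \<le> d - mdeg nu")
  case True
  have "monom_of_mdeg (mdeg nu + (d - mdeg nu)) = nu + monom_of_mdeg (d - mdeg nu)"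
    using monom_of_mdeg_add[OF mdeg_nonneg[of nu] True] by simp
  then have "monom_of_mdeg d = nu + monom_of_mdeg (d - mdeg nu)"
    by simp
  moreover have "0 \<le> d" using True mdeg_nonneg[of nu] by (metis diff_ge_0_iff_ge order_trans)
  ultimately show ?thesis using True by (simp add: hom_comp_def mult_single lookup_single_mult)
next
  case False
  have "\<nexists>mu. monom_of_mdeg d = nu + mu" if "0 \<le> d"
  proof
    assume "\<exists>mu. monom_of_mdeg d = nu + mu"
    then obtain mu where "monom_of_mdeg d = nu + mu" by blast
    then have "d - mdeg nu = mdeg mu" using mdeg_monom_of_mdeg[OF that] by (auto simp: mdeg_add)
    then show False using False mdeg_nonneg by metis
  qed
  then show ?thesis using False by (simp add: hom_comp_def lookup_single_mult_not_dvd)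
qed

lemma hom_comp_mult_hom_poly:
  assumes "hom_poly e (q::('v::finite, 'k::field) pring)"
  shows "hom_comp d (p * q) = hom_comp (d - e) p * q"
proof (cases "q = 0")
  case False
  with assms have "0 \<le> e" by (rule hom_poly_nonzero_imp_nonneg)
  then show ?thesis
    using hom_comp_single_mult[of d "monom_of_mdeg e" _ p] hom_poly_eq_single[OF assms]
    by (metis mdeg_monom_of_mdeg mult.commute)
qed simp

section \<open>Vectors and their coordinates\<close>

lemma Fmod_diff: "v \<in> Fmod r n \<Longrightarrow> w \<in> Fmod r n \<Longrightarrow> v - w \<in> Fmod r n"
  by (simp add: Fmod_def)

lemma Fmod_smul: "v \<in> Fmod r n \<Longrightarrow> smul s v \<in> Fmod r n"
  by (simp add: Fmod_def smul_def)

lemma zero_in_Fmod [simp]: "0 \<in> Fmod r n"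
  by (simp add: Fmod_def)

lemma smul_one [simp]: "smul 1 v = v"
  by (simp add: smul_def)

lemma smul_smul: "smul s (smul t v) = smul (s * t) v"
  by (simp add: smul_def fun_eq_iff algebra_simps)

lemma smul_add_right: "smul s (v + w) = smul s v + smul s w"
  by (simp add: smul_def fun_eq_iff algebra_simps)

definition lin_comb :: "((nat \<Rightarrow> ('v, 'k::field) pring) \<Rightarrow> ('v, 'k) pring) \<Rightarrow> (nat \<Rightarrow> ('v, 'k) pring) set
    \<Rightarrow> (nat \<Rightarrow> ('v, 'k) pring)" where
  "lin_comb a S = (\<lambda>k. \<Sum>c\<in>S. a c * c k)"

lemma lin_comb_in_Fmod: "S \<subseteq> Fmod r n \<Longrightarrow> lin_comb a S \<in> Fmod r n"
  by (auto simp: lin_comb_def Fmod_def intro!: sum.neutral)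

lemma lin_comb_cong: "(\<And>c. c \<in> S \<Longrightarrow> a c = b c) \<Longrightarrow> lin_comb a S = lin_comb b S"
  by (simp add: lin_comb_def)

lemma lin_comb_add: "lin_comb (\<lambda>c. a c + b c) S = lin_comb a S + lin_comb b S"
  by (simp add: lin_comb_def fun_eq_iff sum.distrib algebra_simps)

lemma lin_comb_diff: "lin_comb (\<lambda>c. a c - b c) S = lin_comb a S - lin_comb b S"
  by (simp add: lin_comb_def fun_eq_iff sum_subtractf algebra_simps)

lemma lin_comb_smul: "lin_comb (\<lambda>c. s * a c) S = smul s (lin_comb a S)"
  by (simp add: lin_comb_def fun_eq_iff smul_def sum_distrib_left algebra_simps)

lemma lin_comb_insert: "finite S \<Longrightarrow> x \<notin> S \<Longrightarrow> lin_comb a (insert x S) = smul (a x) x + lin_comb a S"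
  by (simp add: lin_comb_def smul_def fun_eq_iff)

lemma lin_comb_remove: "finite S \<Longrightarrow> x \<in> S \<Longrightarrow> lin_comb a S = smul (a x) x + lin_comb a (S - {x})"
  using lin_comb_insert[of "S - {x}" x a] by (simp add: insert_absorb)

lemma lin_comb_mono_neutral:
  assumes "finite S" "finite T" "{c. a c \<noteq> 0} \<subseteq> S" "{c. a c \<noteq> 0} \<subseteq> T"
  shows "lin_comb a S = lin_comb a T"
proof -
  have "lin_comb a S = lin_comb a (S \<inter> T)"
    unfolding lin_comb_def by (rule ext, rule sum.mono_neutral_right) (use assms in auto)
  also have "\<dots> = lin_comb a T"
    unfolding lin_comb_def by (rule ext, rule sum.mono_neutral_left) (use assms in auto)
  finally show ?thesis .
qed

definition hom_comp_vec :: "(nat \<Rightarrow> nat) \<Rightarrow> (nat \<Rightarrow> nat \<Rightarrow> ('v::finite \<Rightarrow> int)) \<Rightarrow> nat \<Rightarrow> ('v \<Rightarrow> int)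
    \<Rightarrow> (nat \<Rightarrow> ('v, 'k::field) pring) \<Rightarrow> (nat \<Rightarrow> ('v, 'k) pring)" where
  "hom_comp_vec r deg n a v = (\<lambda>j. if j < r n then hom_comp (a - deg n j) (v j) else 0)"

lemma homog_of_iff:
  "homog_of r deg n a v \<longleftrightarrow> v \<in> Fmod r n \<and> (\<forall>j<r n. hom_poly (a - deg n j) (v j))"
  by (auto simp: homog_of_def hom_poly_def fun_eq_iff algebra_simps)

lemma hom_comp_vec_in_Fmod [simp]: "hom_comp_vec r deg n a v \<in> Fmod r n"
  by (simp add: Fmod_def hom_comp_vec_def)

lemma homog_of_hom_comp_vec: "homog_of r deg n a (hom_comp_vec r deg n a v)"
  by (simp add: homog_of_iff) (simp add: hom_comp_vec_def hom_poly_hom_comp)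

lemma homog_of_iff_hom_comp_vec:
  "homog_of r deg n a v \<longleftrightarrow> v \<in> Fmod r n \<and> hom_comp_vec r deg n a v = v"
proof
  assume "homog_of r deg n a v"
  then show "v \<in> Fmod r n \<and> hom_comp_vec r deg n a v = v"
    by (auto simp: homog_of_iff hom_comp_vec_def fun_eq_iff hom_comp_hom_poly Fmod_def)
qed (metis homog_of_hom_comp_vec)

lemma hom_comp_vec_diff: "hom_comp_vec r deg n a (v - w) = hom_comp_vec r deg n a v - hom_comp_vec r deg n a w"
  by (simp add: hom_comp_vec_def fun_eq_iff hom_comp_diff)

lemma homog_of_diff:
  fixes deg :: "nat \<Rightarrow> nat \<Rightarrow> 'v::finite \<Rightarrow> int"
  shows "homog_of r deg n a v \<Longrightarrow> homog_of r deg n a w \<Longrightarrow> homog_of r deg n a (v - w)"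
  by (simp add: homog_of_iff_hom_comp_vec hom_comp_vec_diff Fmod_diff)

lemma homog_of_smul:
  assumes "homog_of r deg n a v" "hom_poly e s"
  shows "homog_of r deg n (a + e) (smul s v)"
proof -
  have "hom_poly (a + e - deg n j) (s * v j)" if "j < r n" for j
    using hom_poly_mult[OF assms(2), of "a - deg n j" "v j"] assms(1) that
    by (simp add: homog_of_iff algebra_simps)
  then show ?thesis
    using assms(1) Fmod_smul unfolding homog_of_iff by (auto simp: smul_def)
qed

lemma hom_comp_vec_lin_comb:
  assumes "\<forall>c\<in>S. homog_of r deg n (dg c) c"
  shows "hom_comp_vec r deg n a (lin_comb co S) = lin_comb (\<lambda>c. hom_comp (a - dg c) (co c)) S"
proof
  fix k
  show "hom_comp_vec r deg n a (lin_comb co S) k = lin_comb (\<lambda>c. hom_comp (a - dg c) (co c)) S k"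
  proof (cases "k < r n")
    case True
    have "hom_comp (a - deg n k) (co c * c k) = hom_comp (a - dg c) (co c) * c k" if "c \<in> S" for c
    proof -
      have "hom_poly (dg c - deg n k) (c k)" using assms that True by (auto simp: homog_of_iff)
      then show ?thesis by (simp add: hom_comp_mult_hom_poly)
    qed
    then show ?thesis using True by (simp add: hom_comp_vec_def lin_comb_def hom_comp_sum)
  next
    case False
    then have "\<forall>c\<in>S. c k = 0" using assms by (auto simp: homog_of_iff Fmod_def)
    then show ?thesis using False by (auto simp: hom_comp_vec_def lin_comb_def intro!: sum.neutral)
  qed
qed

lemma is_coordI:
  assumes "\<And>c. c \<notin> B \<Longrightarrow> a c = 0" "finite S" "{c. a c \<noteq> 0} \<subseteq> S" "v = lin_comb a S"
  shows "is_coord B v a"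
proof -
  have "finite {c. a c \<noteq> 0}" using assms(2,3) finite_subset by blast
  moreover have "lin_comb a S = lin_comb a {c. a c \<noteq> 0}"
    by (rule lin_comb_mono_neutral) (use assms calculation in auto)
  ultimately show ?thesis using assms by (simp add: is_coord_def lin_comb_def)
qed

lemma is_coord_lin_comb:
  assumes "is_coord B v a" "finite S" "{c. a c \<noteq> 0} \<subseteq> S"
  shows "lin_comb a S = v"
proof -
  have "lin_comb a S = lin_comb a {c. a c \<noteq> 0}"
    by (rule lin_comb_mono_neutral) (use assms in \<open>auto simp: is_coord_def\<close>)
  then show ?thesis using assms(1) by (simp add: is_coord_def lin_comb_def)
qed

lemma is_coord_coord:
  assumes "is_basis F B" "v \<in> F"
  shows "is_coord B v (coord B v)"
proof -
  have "\<exists>!a. is_coord B v a" using assms by (simp add: is_basis_def)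
  then show ?thesis unfolding coord_def by (rule theI')
qed

lemma coord_eqI:
  assumes "is_basis F B" "v \<in> F" "is_coord B v a"
  shows "coord B v = a"
proof -
  have "\<exists>!a. is_coord B v a" using assms by (simp add: is_basis_def)
  with is_coord_coord[OF assms(1,2)] assms(3) show ?thesis by blast
qed

lemma coord_eq_zero_outside: "is_basis F B \<Longrightarrow> v \<in> F \<Longrightarrow> c \<notin> B \<Longrightarrow> coord B v c = 0"
  using is_coord_coord[of F B v] unfolding is_coord_def by blast

lemma finite_coord_nonzero: "is_basis F B \<Longrightarrow> v \<in> F \<Longrightarrow> finite {c. coord B v c \<noteq> 0}"
  using is_coord_coord[of F B v] unfolding is_coord_def by blast

lemma lin_comb_coord:
  "is_basis F B \<Longrightarrow> v \<in> F \<Longrightarrow> finite S \<Longrightarrow> {c. coord B v c \<noteq> 0} \<subseteq> S \<Longrightarrow> lin_comb (coord B v) S = v"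
  by (rule is_coord_lin_comb[OF is_coord_coord])

lemma coord_inject:
  assumes "is_basis F B" "v \<in> F" "w \<in> F" "coord B v = coord B w"
  shows "v = w"
proof -
  have "v = lin_comb (coord B v) {c. coord B v c \<noteq> 0}"
    using lin_comb_coord[OF assms(1,2) finite_coord_nonzero[OF assms(1,2)]] by simp
  also have "\<dots> = lin_comb (coord B w) {c. coord B w c \<noteq> 0}"
    using assms(4) by simp
  also have "\<dots> = w"
    using lin_comb_coord[OF assms(1,3) finite_coord_nonzero[OF assms(1,3)]] by simp
  finally show ?thesis .
qed

lemma coord_basis_elem:
  assumes "is_basis F B" "c \<in> B"
  shows "coord B c = (\<lambda>x. if x = c then 1 else 0)"
proof (rule coord_eqI[OF assms(1)])
  show "c \<in> F" using assms by (auto simp: is_basis_def)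
  show "is_coord B c (\<lambda>x. if x = c then 1 else 0)"
    by (rule is_coordI[of _ _ "{c}"]) (use assms(2) in \<open>auto simp: lin_comb_def split: if_splits\<close>)
qed

lemma coord_smul_diff:
  assumes B: "is_basis (Fmod r n) B" and v: "v \<in> Fmod r n" and w: "w \<in> Fmod r n"
  shows "coord B (smul s v - smul t w) = (\<lambda>c. s * coord B v c - t * coord B w c)"
proof (rule coord_eqI[OF B Fmod_diff[OF Fmod_smul[OF v] Fmod_smul[OF w]]])
  let ?S = "{c. coord B v c \<noteq> 0} \<union> {c. coord B w c \<noteq> 0}"
  have S: "finite ?S" using finite_coord_nonzero[OF B] v w by blast
  have "lin_comb (\<lambda>c. s * coord B v c - t * coord B w c) ?S = smul s v - smul t w"
    by (simp add: lin_comb_diff lin_comb_smul lin_comb_coord[OF B v S] lin_comb_coord[OF B w S])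
  with S show "is_coord B (smul s v - smul t w) (\<lambda>c. s * coord B v c - t * coord B w c)"
    by (intro is_coordI[of _ _ ?S]) (auto simp: coord_eq_zero_outside[OF B v] coord_eq_zero_outside[OF B w])
qed

lemma finite_supp: "is_basis F B \<Longrightarrow> v \<in> F \<Longrightarrow> finite (supp B v)"
  by (rule finite_subset[OF _ finite_coord_nonzero]) (auto simp: supp_def)

lemma supp_eq_empty_imp_zero:
  assumes B: "is_basis (Fmod r n) B" and v: "v \<in> Fmod r n" and "supp B v = {}"
  shows "v = 0"
proof (rule coord_inject[OF B v zero_in_Fmod])
  have "coord B 0 = (\<lambda>c. 0)"
    using coord_smul_diff[OF B zero_in_Fmod zero_in_Fmod, of 0 0] by (simp add: smul_def)
  then show "coord B v = coord B 0"
    using assms coord_eq_zero_outside[OF B v] by (auto simp: supp_def)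
qed

lemma supp_smul_diff_cancel:
  assumes B: "is_basis (Fmod r n) B" and v: "v \<in> Fmod r n" and w: "w \<in> Fmod r n"
    and "supp B w \<subseteq> supp B v" and "s * coord B v b = t * coord B w b"
  shows "supp B (smul s v - smul t w) \<subseteq> supp B v - {b}"
proof
  fix c assume "c \<in> supp B (smul s v - smul t w)"
  then have cB: "c \<in> B" and nz: "s * coord B v c - t * coord B w c \<noteq> 0"
    by (auto simp: supp_def coord_smul_diff[OF B v w])
  have "c \<in> supp B v"
  proof (rule ccontr)
    assume "c \<notin> supp B v"
    then have "coord B v c = 0" "coord B w c = 0" using assms(4) cB by (auto simp: supp_def)
    with nz show False by simp
  qed
  moreover have "c \<noteq> b" using nz assms(5) by auto
  ultimately show "c \<in> supp B v - {b}" by blast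
qed

section \<open>Homogeneous bases\<close>

definition hom_basis :: "(nat \<Rightarrow> nat) \<Rightarrow> (nat \<Rightarrow> nat \<Rightarrow> ('v \<Rightarrow> int)) \<Rightarrow> nat
    \<Rightarrow> (nat \<Rightarrow> ('v, 'k::field) pring) set \<Rightarrow> bool" where
  "hom_basis r deg n B \<longleftrightarrow> is_basis (Fmod r n) B \<and> (\<forall>c\<in>B. homog r deg n c)"

definition hdeg :: "(nat \<Rightarrow> nat) \<Rightarrow> (nat \<Rightarrow> nat \<Rightarrow> ('v \<Rightarrow> int)) \<Rightarrow> nat
    \<Rightarrow> (nat \<Rightarrow> ('v, 'k::field) pring) \<Rightarrow> ('v \<Rightarrow> int)" where
  "hdeg r deg n c = (SOME a. homog_of r deg n a c)"

lemma homog_of_hdeg: "homog r deg n c \<Longrightarrow> homog_of r deg n (hdeg r deg n c) c"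
  using someI_ex[of "\<lambda>a. homog_of r deg n a c"] unfolding hdeg_def homog_def by blast

lemma coord_hom_comp_vec:
  assumes B: "hom_basis r deg n B" and v: "v \<in> Fmod r n"
  shows "coord B (hom_comp_vec r deg n a v) = (\<lambda>c. hom_comp (a - hdeg r deg n c) (coord B v c))"
proof (rule coord_eqI[OF _ hom_comp_vec_in_Fmod])
  let ?S = "{c. coord B v c \<noteq> 0}"
  have BF: "is_basis (Fmod r n) B" using B by (simp add: hom_basis_def)
  have S: "finite ?S" "?S \<subseteq> B" using finite_coord_nonzero[OF BF v] coord_eq_zero_outside[OF BF v] by auto
  have "hom_comp_vec r deg n a v = hom_comp_vec r deg n a (lin_comb (coord B v) ?S)"
    using lin_comb_coord[OF BF v S(1)] by simp
  also have "\<dots> = lin_comb (\<lambda>c. hom_comp (a - hdeg r deg n c) (coord B v c)) ?S"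
    using B S(2) by (intro hom_comp_vec_lin_comb) (auto simp: hom_basis_def homog_of_hdeg)
  finally show "is_coord B (hom_comp_vec r deg n a v) (\<lambda>c. hom_comp (a - hdeg r deg n c) (coord B v c))"
    using S(1) by (intro is_coordI[of _ _ ?S]) (auto simp: coord_eq_zero_outside[OF BF v])
qed (use B in \<open>simp add: hom_basis_def\<close>)

lemma hom_poly_coord:
  fixes deg :: "nat \<Rightarrow> nat \<Rightarrow> 'v::finite \<Rightarrow> int"
  assumes B: "hom_basis r deg n B" and y: "homog_of r deg n a y"
  shows "hom_poly (a - hdeg r deg n c) (coord B y c)"
proof -
  have "y \<in> Fmod r n" "hom_comp_vec r deg n a y = y" using y homog_of_iff_hom_comp_vec by blast+
  then have "coord B y c = hom_comp (a - hdeg r deg n c) (coord B y c)"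
    using coord_hom_comp_vec[OF B, of y a] by (metis (mono_tags, lifting))
  then show ?thesis using hom_poly_hom_comp by metis
qed

lemma homog_of_if_hom_poly_coord:
  fixes deg :: "nat \<Rightarrow> nat \<Rightarrow> 'v::finite \<Rightarrow> int"
  assumes B: "hom_basis r deg n B" and v: "v \<in> Fmod r n"
    and hc: "\<And>c. c \<in> B \<Longrightarrow> hom_poly (a - hdeg r deg n c) (coord B v c)"
  shows "homog_of r deg n a v"
proof -
  have BF: "is_basis (Fmod r n) B" using B by (simp add: hom_basis_def)
  have "coord B (hom_comp_vec r deg n a v) = coord B v"
  proof
    fix c
    show "coord B (hom_comp_vec r deg n a v) c = coord B v c"
      by (cases "c \<in> B") (simp_all add: coord_hom_comp_vec[OF B v] hc hom_comp_hom_poly coord_eq_zero_outside[OF BF v])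
  qed
  then have "hom_comp_vec r deg n a v = v" by (rule coord_inject[OF BF hom_comp_vec_in_Fmod v])
  then show ?thesis using v homog_of_iff_hom_comp_vec by blast
qed

lemma supp_hom_comp_vec_subset:
  fixes deg :: "nat \<Rightarrow> nat \<Rightarrow> 'v::finite \<Rightarrow> int"
  shows "hom_basis r deg n B \<Longrightarrow> v \<in> Fmod r n \<Longrightarrow> supp B (hom_comp_vec r deg n a v) \<subseteq> supp B v"
  by (auto simp: supp_def coord_hom_comp_vec)

lemma exists_hom_comp_vec_nonzero:
  fixes v :: "nat \<Rightarrow> ('v::finite, 'k::field) pring"
  assumes "v \<in> Fmod r n" "v \<noteq> 0"
  obtains a where "hom_comp_vec r deg n a v \<noteq> 0"
proof -
  obtain j where j: "v j \<noteq> 0" using assms(2) by (auto simp: fun_eq_iff)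
  have "j < r n"
  proof (rule ccontr)
    assume "\<not> j < r n"
    with assms(1) j show False by (simp add: Fmod_def)
  qed
  obtain mu where mu: "Poly_Mapping.lookup (v j) mu \<noteq> 0"
    using j by (auto simp: poly_mapping_eq_iff fun_eq_iff)
  have "hom_comp_vec r deg n (mdeg mu + deg n j) v j \<noteq> 0"
    using \<open>j < r n\<close> mu by (simp add: hom_comp_vec_def hom_comp_def mdeg_nonneg)
  then show ?thesis using that by (metis zero_fun_apply)
qed

lemma hom_basis_divide_monom:
  assumes B: "hom_basis r deg n B" and y: "homog_of r deg n a y" and z: "homog_of r deg n D z"
    and "a \<le> D" and zy: "supp B z \<subseteq> supp B y"
  obtains z' where "homog_of r deg n a z'"
    "smul (Poly_Mapping.single (monom_of_mdeg (D - a)) 1) z' = z" "supp B z' = supp B z"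
proof -
  let ?S = "supp B y" and ?d = "hdeg r deg n" and ?x = "Poly_Mapping.single (monom_of_mdeg (D - a)) 1"
  have BF: "is_basis (Fmod r n) B" using B by (simp add: hom_basis_def)
  have yF: "y \<in> Fmod r n" and zF: "z \<in> Fmod r n" using y z by (simp_all add: homog_of_def)
  have S: "finite ?S" "?S \<subseteq> B" using finite_supp[OF BF yF] by (auto simp: supp_def)
  \<comment> \<open>basis elements in the support of \<open>y\<close> have degree at most \<open>a\<close>, so the coordinates of
    \<open>z\<close> there are divisible by the monomial of degree \<open>D - a\<close>\<close>
  have dS: "?d c \<le> a" if "c \<in> ?S" for c
    using hom_poly_nonzero_imp_nonneg[OF hom_poly_coord[OF B y]] that by (auto simp: supp_def)
  define co where "co c = (if c \<in> ?S then Poly_Mapping.single (monom_of_mdeg (a - ?d c))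
      (Poly_Mapping.lookup (coord B z c) (monom_of_mdeg (D - ?d c))) else 0)" for c
  define z' where "z' = lin_comb co ?S"
  have z'F: "z' \<in> Fmod r n" unfolding z'_def using S BF by (intro lin_comb_in_Fmod) (auto simp: is_basis_def)
  have cz': "coord B z' = co"
    by (rule coord_eqI[OF BF z'F], rule is_coordI[OF _ S(1)]) (use S in \<open>auto simp: co_def z'_def\<close>)
  have czx: "coord B z c = ?x * co c" for c
  proof (cases "c \<in> ?S")
    case True
    have "D - ?d c - (D - a) = a - ?d c" by simp
    with True hom_poly_eq_monom_mult[OF hom_poly_coord[OF B z, of c], of "D - a"] dS assms(4)
    show ?thesis by (simp add: co_def)
  next
    case False
    then show ?thesis using zy coord_eq_zero_outside[OF BF zF] by (auto simp: co_def supp_def)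
  qed
  show ?thesis
  proof
    show "homog_of r deg n a z'"
      by (rule homog_of_if_hom_poly_coord[OF B z'F]) (use dS in \<open>auto simp: cz' co_def hom_poly_single\<close>)
    have "smul ?x z' = lin_comb (\<lambda>c. ?x * co c) ?S"
      by (simp add: z'_def lin_comb_smul)
    also have "\<dots> = lin_comb (coord B z) ?S"
      by (rule lin_comb_cong) (simp add: czx)
    also have "\<dots> = z"
      by (rule lin_comb_coord[OF BF zF S(1)]) (use zy coord_eq_zero_outside[OF BF zF] in \<open>auto simp: supp_def\<close>)
    finally show "smul ?x z' = z" .
    show "supp B z' = supp B z"
      unfolding supp_def cz' czx by (simp add: single_mult_eq_zero_iff)
  qed
qed

lemma hom_basis_cancel_coord:
  fixes deg :: "nat \<Rightarrow> nat \<Rightarrow> 'v::finite \<Rightarrow> int"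
  assumes B: "hom_basis r deg n B" and y: "homog_of r deg n a y" and w: "homog_of r deg n a' w"
    and yb: "b \<in> supp B y" and wb: "b \<in> supp B w"
  obtains \<beta> t where "\<beta> \<noteq> 0"
    "homog_of r deg n (sup a a') (smul (Poly_Mapping.single (monom_of_mdeg (sup a a' - a)) \<beta>) y - smul t w)"
    "Poly_Mapping.single (monom_of_mdeg (sup a a' - a)) \<beta> * coord B y b = t * coord B w b"
proof -
  let ?D = "sup a a'" and ?d = "hdeg r deg n b"
  let ?\<alpha> = "Poly_Mapping.lookup (coord B y b) (monom_of_mdeg (a - ?d))"
  let ?\<beta> = "Poly_Mapping.lookup (coord B w b) (monom_of_mdeg (a' - ?d))"
  let ?s = "Poly_Mapping.single (monom_of_mdeg (?D - a)) ?\<beta>"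
  let ?t = "Poly_Mapping.single (monom_of_mdeg (?D - a')) ?\<alpha>"
  have hy: "hom_poly (a - ?d) (coord B y b)" and hw: "hom_poly (a' - ?d) (coord B w b)"
    using hom_poly_coord[OF B] y w by blast+
  have ny: "0 \<le> a - ?d" and nw: "0 \<le> a' - ?d"
    using hom_poly_nonzero_imp_nonneg hy hw yb wb by (fastforce simp: supp_def)+
  have nD: "0 \<le> ?D - a" "0 \<le> ?D - a'" by simp_all
  have "?\<beta> \<noteq> 0" using wb hom_poly_eq_single[OF hw] by (auto simp: supp_def)
  moreover have "homog_of r deg n ?D (smul ?s y - smul ?t w)"
  proof (rule homog_of_diff)
    show "homog_of r deg n ?D (smul ?s y)"
      using homog_of_smul[OF y hom_poly_single[OF nD(1)]] by simp
    show "homog_of r deg n ?D (smul ?t w)"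
      using homog_of_smul[OF w hom_poly_single[OF nD(2)]] by simp
  qed
  moreover have "?s * coord B y b = ?t * coord B w b"
  proof -
    have "monom_of_mdeg (?D - a) + monom_of_mdeg (a - ?d) = monom_of_mdeg (?D - ?d)"
      using monom_of_mdeg_add[OF nD(1) ny] by simp
    moreover have "monom_of_mdeg (?D - a') + monom_of_mdeg (a' - ?d) = monom_of_mdeg (?D - ?d)"
      using monom_of_mdeg_add[OF nD(2) nw] by simp
    ultimately show ?thesis
      by (subst hom_poly_eq_single[OF hy], subst hom_poly_eq_single[OF hw]) (simp add: mult_single mult.commute)
  qed
  ultimately show ?thesis using that by blast
qed

section \<open>Basis exchange\<close>

lemma is_coord_exchange:
  assumes E: "is_basis (Fmod r n) E" and e: "e \<in> E" and h: "h \<in> Fmod r n" and hE: "h \<notin> E - {e}"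
    and b: "is_coord (insert h (E - {e})) v b"
  shows "is_coord E v (\<lambda>x. (if x \<in> E - {e} then b x else 0) + b h * coord E h x)"
proof -
  let ?b = "\<lambda>x. if x \<in> E - {e} then b x else 0" and ?p = "coord E h"
  let ?T = "{c. b c \<noteq> 0} - {h}"
  let ?S = "?T \<union> {c. ?p c \<noteq> 0}"
  have bE: "{c. b c \<noteq> 0} \<subseteq> insert h (E - {e})" using b by (auto simp: is_coord_def)
  have T: "finite ?T" using b unfolding is_coord_def by blast
  have S: "finite ?S" using T finite_coord_nonzero[OF E h] by (rule finite_UnI)
  have "v = lin_comb b (insert h ?T)"
    by (rule is_coord_lin_comb[symmetric, OF b]) (use T in auto)
  also have "\<dots> = smul (b h) h + lin_comb b ?T"
    by (rule lin_comb_insert) (use T in auto)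
  also have "lin_comb b ?T = lin_comb ?b ?T"
    by (rule lin_comb_cong) (use bE in auto)
  also have "lin_comb ?b ?T = lin_comb ?b ?S"
    by (rule lin_comb_mono_neutral) (use T S hE in auto)
  also have "smul (b h) h = smul (b h) (lin_comb ?p ?S)"
    using lin_comb_coord[OF E h S] by simp
  also have "smul (b h) (lin_comb ?p ?S) + lin_comb ?b ?S = lin_comb (\<lambda>x. ?b x + b h * ?p x) ?S"
    by (simp add: lin_comb_add lin_comb_smul add.commute)
  finally have "v = lin_comb (\<lambda>x. ?b x + b h * ?p x) ?S" .
  with S show ?thesis
    by (intro is_coordI[of _ _ ?S]) (use bE hE coord_eq_zero_outside[OF E h] in auto)
qed

lemma exists_coord_exchange:
  assumes E: "is_basis (Fmod r n) E" and e: "e \<in> E" and h: "h \<in> Fmod r n" and hE: "h \<notin> E - {e}"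
    and u: "u * coord E h e = 1" and v: "v \<in> Fmod r n"
  shows "\<exists>b. is_coord (insert h (E - {e})) v b"
proof -
  let ?a = "coord E v" and ?p = "coord E h"
  \<comment> \<open>read off from \<open>e = u (h - \<Sum>\<^sub>x\<^sub>\<noteq>\<^sub>e p\<^sub>x x)\<close>, where \<open>p = coord E h\<close>\<close>
  define b where "b x = (if x = h then u * ?a e else if x \<in> E - {e} then ?a x - u * ?a e * ?p x else 0)" for x
  let ?S = "{c. ?a c \<noteq> 0} \<union> {c. ?p c \<noteq> 0} \<union> {e}"
  have S: "finite ?S" using finite_coord_nonzero[OF E] h v by blast
  have SE: "?S \<subseteq> E" using e coord_eq_zero_outside[OF E] h v by blast
  have hS: "h \<notin> ?S - {e}" using hE SE by blast
  have "lin_comb b (insert h (?S - {e})) = smul (u * ?a e) h + lin_comb b (?S - {e})"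
    using S hS by (simp add: lin_comb_insert b_def)
  also have "lin_comb b (?S - {e}) = lin_comb ?a (?S - {e}) - smul (u * ?a e) (lin_comb ?p (?S - {e}))"
    by (simp add: lin_comb_diff[symmetric] lin_comb_smul[symmetric] mult.assoc)
       (rule lin_comb_cong, use hS SE in \<open>auto simp: b_def\<close>)
  also have "smul (u * ?a e) h = smul (?a e) e + smul (u * ?a e) (lin_comb ?p (?S - {e}))"
  proof -
    have "h = lin_comb ?p ?S" by (rule lin_comb_coord[OF E h S, symmetric]) auto
    also have "\<dots> = smul (?p e) e + lin_comb ?p (?S - {e})" by (rule lin_comb_remove[OF S]) simp
    finally have hh: "h = smul (?p e) e + lin_comb ?p (?S - {e})" .
    have "smul (u * ?a e) h = smul (u * ?a e) (smul (?p e) e + lin_comb ?p (?S - {e}))"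
      using hh by (rule arg_cong)
    also have "\<dots> = smul (u * ?a e * ?p e) e + smul (u * ?a e) (lin_comb ?p (?S - {e}))"
      by (simp add: smul_add_right smul_smul)
    also have "u * ?a e * ?p e = ?a e" using u by (metis mult.commute mult.left_commute mult_1_right)
    finally show ?thesis .
  qed
  also have "smul (?a e) e + smul (u * ?a e) (lin_comb ?p (?S - {e})) +
      (lin_comb ?a (?S - {e}) - smul (u * ?a e) (lin_comb ?p (?S - {e}))) = lin_comb ?a ?S"
    using lin_comb_remove[OF S, of e ?a] by simp
  also have "\<dots> = v" by (rule lin_comb_coord[OF E v S]) auto
  finally have "lin_comb b (insert h (?S - {e})) = v" .
  from this[symmetric] have "is_coord (insert h (E - {e})) v b"
    by (rule is_coordI[rotated 3]) (use S in \<open>auto simp: b_def\<close>)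
  then show ?thesis by blast
qed

lemma basis_exchange:
  assumes E: "is_basis (Fmod r n) E" and e: "e \<in> E" and h: "h \<in> Fmod r n"
    and u: "u * coord E h e = 1"
  shows "h \<notin> E - {e}" and "is_basis (Fmod r n) (insert h (E - {e}))"
proof -
  show hE: "h \<notin> E - {e}"
  proof
    assume "h \<in> E - {e}"
    then have "coord E h e = 0" using coord_basis_elem[OF E] by auto
    with u show False by simp
  qed
  have "b = b'" if b: "is_coord (insert h (E - {e})) v b" and b': "is_coord (insert h (E - {e})) v b'"
    and v: "v \<in> Fmod r n" for v b b'
  proof -
    have T: "(if x \<in> E - {e} then b x else 0) + b h * coord E h x =
             (if x \<in> E - {e} then b' x else 0) + b' h * coord E h x" for x
      using coord_eqI[OF E v is_coord_exchange[OF E e h hE b]]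
        coord_eqI[OF E v is_coord_exchange[OF E e h hE b']] by metis
    have pu: "coord E h e * u = 1" using u by (simp add: mult.commute)
    have "b h * coord E h e * u = b' h * coord E h e * u" using T[of e] by simp
    then have bh: "b h = b' h" by (simp add: mult.assoc pu)
    show "b = b'"
    proof
      fix x show "b x = b' x"
      proof (cases "x \<in> E - {e}")
        case True
        then show ?thesis using T[of x] bh by simp
      next
        case False
        then show ?thesis using bh b b' by (cases "x = h") (auto simp: is_coord_def)
      qed
    qed
  qed
  then show "is_basis (Fmod r n) (insert h (E - {e}))"
    using E e h exists_coord_exchange[OF E e h hE u] by (auto simp: is_basis_def)
qed

definition unit_vec :: "nat \<Rightarrow> (nat \<Rightarrow> ('v, 'k::field) pring)" where
  "unit_vec j = (\<lambda>k. if k = j then 1 else 0)"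

lemma inj_unit_vec: "inj (unit_vec :: nat \<Rightarrow> (nat \<Rightarrow> ('v, 'k::field) pring))"
  by (rule injI) (metis unit_vec_def one_neq_zero)

lemma lin_comb_unit_vec:
  "lin_comb a (unit_vec ` {..<N}) k = (if k < N then a (unit_vec k) else (0::('v, 'k::field) pring))"
proof -
  have "lin_comb a (unit_vec ` {..<N}) k = (\<Sum>j<N. a (unit_vec j) * unit_vec j k)"
    unfolding lin_comb_def by (simp add: sum.reindex[OF inj_on_subset[OF inj_unit_vec]])
  also have "\<dots> = (\<Sum>j<N. if j = k then a (unit_vec j) else 0)"
    by (rule sum.cong) (auto simp: unit_vec_def)
  finally show ?thesis by simp
qed

lemma homog_of_unit_vec: "j < r n \<Longrightarrow> homog_of r deg n (deg n j) (unit_vec j :: nat \<Rightarrow> ('v, 'k::field) pring)"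
  by (auto simp: homog_of_def unit_vec_def Fmod_def mdeg_def fun_eq_iff)

lemma hom_basis_unit_vec: "hom_basis r deg n (unit_vec ` {..<r n} :: (nat \<Rightarrow> ('v, 'k::field) pring) set)"
  unfolding hom_basis_def is_basis_def
proof (intro conjI ballI)
  let ?U = "unit_vec ` {..<r n} :: (nat \<Rightarrow> ('v, 'k) pring) set"
  show "?U \<subseteq> Fmod r n" by (auto simp: Fmod_def unit_vec_def)
  show "homog r deg n c" if "c \<in> ?U" for c
    using that homog_of_unit_vec unfolding homog_def by blast
  fix v :: "nat \<Rightarrow> ('v, 'k) pring" assume v: "v \<in> Fmod r n"
  have val: "a (unit_vec j) = v j" if a: "is_coord ?U v a" and "j < r n" for a j
  proof -
    have "{c. a c \<noteq> 0} \<subseteq> ?U" using a by (auto simp: is_coord_def)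
    then have "lin_comb a ?U = v" by (rule is_coord_lin_comb[OF a finite_imageI[OF finite_lessThan]])
    then show ?thesis using fun_cong[of "lin_comb a ?U" v j] lin_comb_unit_vec[of a "r n" j] \<open>j < r n\<close> by simp
  qed
  have unique: "a = a'" if a: "is_coord ?U v a" and a': "is_coord ?U v a'" for a a'
  proof
    fix c show "a c = a' c"
      using val[OF a] val[OF a'] a a' by (cases "c \<in> ?U") (auto simp: is_coord_def)
  qed
  define a where "a c = (if c \<in> ?U then v (inv unit_vec c) else 0)" for c
  have "is_coord ?U v a"
  proof (rule is_coordI[of _ _ ?U])
    show "v = lin_comb a ?U"
      using v by (auto simp: fun_eq_iff lin_comb_unit_vec a_def inv_f_f[OF inj_unit_vec] Fmod_def)
  qed (auto simp: a_def)
  with unique show "\<exists>!a. is_coord ?U v a" by blast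
qed

section \<open>Resolutions with torsion-free \<open>H\<^sub>0\<close>\<close>

lemma dif_in_Fmod: "dif r A (Suc m) v \<in> Fmod r m"
  by (simp add: dif_def Fmod_def)

lemma dif_diff: "dif r A n (v - w) = dif r A n v - dif r A n w"
  by (simp add: dif_def fun_eq_iff sum_subtractf algebra_simps)

lemma dif_smul: "dif r A n (smul s v) = smul s (dif r A n v)"
  by (simp add: dif_def smul_def fun_eq_iff sum_distrib_left algebra_simps)

lemma dif_unit_vec:
  assumes "j < r (Suc m)" "i < r m"
  shows "dif r A (Suc m) (unit_vec j) i = A (Suc m) i j"
proof -
  have "(\<Sum>l<r (Suc m). A (Suc m) i l * unit_vec j l) = (\<Sum>l<r (Suc m). if l = j then A (Suc m) i l else 0)"
    by (rule sum.cong) (auto simp: unit_vec_def)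
  then show ?thesis using assms by (simp add: dif_def)
qed

locale tf_min_resolution =
  fixes r :: "nat \<Rightarrow> nat" and deg :: "nat \<Rightarrow> nat \<Rightarrow> ('v::finite \<Rightarrow> int)"
    and A :: "nat \<Rightarrow> nat \<Rightarrow> nat \<Rightarrow> ('v, 'k::field) pring"
  assumes resolution: "min_graded_free_resolution r deg A"
    and torsion_free: "H0_torsion_free r A"
begin

text \<open>Index shift: \<open>f m\<close> is the differential \<open>F\<^sub>m\<^sub>+\<^sub>1 \<rightarrow> F\<^sub>m\<close>.\<close>

abbreviation f :: "nat \<Rightarrow> (nat \<Rightarrow> ('v, 'k) pring) \<Rightarrow> (nat \<Rightarrow> ('v, 'k) pring)" where
  "f m \<equiv> dif r A (Suc m)"

definition bd :: "nat \<Rightarrow> (nat \<Rightarrow> ('v, 'k) pring) set" where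
  "bd m = f m ` Fmod r (Suc m)"

lemma homog_of_dif: "homog_of r deg (Suc m) a v \<Longrightarrow> homog_of r deg m a (f m v)"
  using resolution unfolding min_graded_free_resolution_def by (metis diff_Suc_1 le_add1 plus_1_eq_Suc)

lemma hom_poly_A:
  assumes "i < r m" "j < r (Suc m)"
  shows "hom_poly (deg (Suc m) j - deg m i) (A (Suc m) i j)"
proof -
  have "hom_poly (deg (Suc m) j - deg m i) (f m (unit_vec j) i)"
    using homog_of_dif[OF homog_of_unit_vec[of j r "Suc m" deg, OF assms(2)]] assms(1)
    by (simp add: homog_of_iff)
  then show ?thesis using dif_unit_vec[where A=A, OF assms(2,1)] by simp
qed

lemma dif_hom_comp_vec: "f m (hom_comp_vec r deg (Suc m) a v) = hom_comp_vec r deg m a (f m v)"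
proof
  fix i
  have "hom_comp (a - deg m i) (A (Suc m) i j * v j) = A (Suc m) i j * hom_comp (a - deg (Suc m) j) (v j)"
    if "i < r m" "j < r (Suc m)" for j
    using hom_comp_mult_hom_poly[OF hom_poly_A[OF that], of "a - deg m i" "v j"]
    by (simp add: mult.commute)
  then show "f m (hom_comp_vec r deg (Suc m) a v) i = hom_comp_vec r deg m a (f m v) i"
    by (simp add: dif_def hom_comp_vec_def hom_comp_sum)
qed

lemma kerf_eq_bd: "kerf r A m = bd m"
proof (cases m)
  case (Suc m')
  then show ?thesis using resolution unfolding min_graded_free_resolution_def bd_def
    by (metis Suc_eq_plus1 le_add2)
qed (simp add: kerf_def bd_def)

lemma bd_subset_Fmod: "bd m \<subseteq> Fmod r m"
  by (auto simp: bd_def dif_in_Fmod)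

lemma bd_smul_diff: "v \<in> bd m \<Longrightarrow> w \<in> bd m \<Longrightarrow> smul s v - smul t w \<in> bd m"
  unfolding bd_def by (auto simp: dif_diff[symmetric] dif_smul[symmetric] intro!: imageI Fmod_diff Fmod_smul)

lemma bd_hom_comp_vec: "v \<in> bd m \<Longrightarrow> hom_comp_vec r deg m a v \<in> bd m"
  unfolding bd_def by (auto simp: dif_hom_comp_vec[symmetric])

lemma exists_hom_lift:
  assumes "z \<in> bd m" "homog_of r deg m a z"
  obtains h where "homog_of r deg (Suc m) a h" "f m h = z"
proof -
  obtain u where "u \<in> Fmod r (Suc m)" "z = f m u" using assms(1) by (auto simp: bd_def)
  then have "f m (hom_comp_vec r deg (Suc m) a u) = z"
    using assms(2) homog_of_iff_hom_comp_vec by (metis dif_hom_comp_vec)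
  then show ?thesis using that homog_of_hom_comp_vec by blast
qed

lemma bd_saturated:
  assumes v: "v \<in> Fmod r m" and b: "b \<noteq> 0" and bv: "smul (Poly_Mapping.single mu b) v \<in> bd m"
  shows "v \<in> bd m"
proof (cases m)
  case 0
  then show ?thesis using torsion_free v bv b kerf_eq_bd[of 0] unfolding H0_torsion_free_def by force
next
  case (Suc m')
  have "dif r A m (smul (Poly_Mapping.single mu b) v) = 0"
    using bv kerf_eq_bd[of m] Suc by (auto simp: kerf_def)
  then have "smul (Poly_Mapping.single mu b) (dif r A m v) = 0" by (simp add: dif_smul)
  then have "dif r A m v = 0"
    using b by (auto simp: smul_def fun_eq_iff single_mult_eq_zero_iff)
  then show ?thesis using v kerf_eq_bd[of m, symmetric] Suc by (simp add: kerf_def)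
qed

text \<open>Cancelling a coordinate of a homogeneous component of \<open>z\<close> against \<open>y\<close> leaves the
  coordinates of \<open>y\<close> outside the support of \<open>z\<close> untouched, so the result is nonzero;
  dividing out the leftover monomial restores the degree of \<open>y\<close>.\<close>

lemma exists_hom_bd_smaller_supp:
  assumes B: "hom_basis r deg m B" and y: "y \<in> bd m" "homog_of r deg m a y"
    and z: "z \<in> bd m" "z \<noteq> 0" "supp B z \<subset> supp B y"
  obtains z' where "z' \<in> bd m" "homog_of r deg m a z'" "supp B z' \<noteq> {}" "supp B z' \<subset> supp B y"
proof -
  have BF: "is_basis (Fmod r m) B" using B by (simp add: hom_basis_def)
  have yF: "y \<in> Fmod r m" and zF: "z \<in> Fmod r m" using y(1) z(1) bd_subset_Fmod by blast+
  obtain a' where w0: "hom_comp_vec r deg m a' z \<noteq> 0" using exists_hom_comp_vec_nonzero[OF zF z(2)] .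
  define w where "w = hom_comp_vec r deg m a' z"
  have w: "w \<in> bd m" "homog_of r deg m a' w" "supp B w \<subseteq> supp B z"
    unfolding w_def using bd_hom_comp_vec[OF z(1)] homog_of_hom_comp_vec supp_hom_comp_vec_subset[OF B zF]
    by blast+
  obtain b where b: "b \<in> supp B w"
    using supp_eq_empty_imp_zero[OF BF hom_comp_vec_in_Fmod] w0 unfolding w_def by blast
  obtain c where c: "c \<in> supp B y" "c \<notin> supp B z" using z(3) by blast
  have wy: "supp B w \<subseteq> supp B y" using w(3) z(3) by blast
  obtain \<beta> t where \<beta>: "\<beta> \<noteq> 0"
    and hom: "homog_of r deg m (sup a a') (smul (Poly_Mapping.single (monom_of_mdeg (sup a a' - a)) \<beta>) y - smul t w)"
    and cancel: "Poly_Mapping.single (monom_of_mdeg (sup a a' - a)) \<beta> * coord B y b = t * coord B w b"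
    using hom_basis_cancel_coord[OF B y(2) w(2)] b wy by blast
  define z'' where "z'' = smul (Poly_Mapping.single (monom_of_mdeg (sup a a' - a)) \<beta>) y - smul t w"
  have wF: "w \<in> Fmod r m" using w(1) bd_subset_Fmod by blast
  have z''y: "supp B z'' \<subseteq> supp B y - {b}"
    unfolding z''_def by (rule supp_smul_diff_cancel[OF BF yF wF wy cancel])
  have "c \<in> supp B z''"
    using c w(3) \<beta> by (auto simp: z''_def supp_def coord_smul_diff[OF BF yF wF] single_mult_eq_zero_iff)
  moreover obtain z' where z': "homog_of r deg m a z'"
      "smul (Poly_Mapping.single (monom_of_mdeg (sup a a' - a)) 1) z' = z''" "supp B z' = supp B z''"
    using hom_basis_divide_monom[OF B y(2) hom[folded z''_def]] z''y by auto
  moreover have "z' \<in> bd m"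
  proof (rule bd_saturated)
    show "z' \<in> Fmod r m" using z'(1) by (simp add: homog_of_def)
    show "smul (Poly_Mapping.single (monom_of_mdeg (sup a a' - a)) 1) z' \<in> bd m"
      using z'(2) bd_smul_diff[OF y(1) w(1)] unfolding z''_def by simp
  qed simp
  ultimately show ?thesis using that z''y b wy by blast
qed

lemma hom_basis_exchange:
  assumes E: "hom_basis r deg n E" and e: "e \<in> E" and h: "homog r deg n h" and u: "u * coord E h e = 1"
  shows "h \<notin> E - {e}" "hom_basis r deg n (insert h (E - {e}))"
  using basis_exchange[of r n E e h u] assms by (auto simp: hom_basis_def homog_def homog_of_def)

text \<open>The new basis element is the homogeneous lift \<open>h\<close> of the smaller boundary if its
  \<open>e\<close>-coordinate (a constant, by degree) is nonzero, and \<open>e - \<lambda>h\<close> otherwise, with \<open>\<lambda>\<close>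
  chosen to cancel one coordinate of \<open>f e\<close>.\<close>

lemma hom_basis_exchange_smaller_bd:
  assumes B: "hom_basis r deg m B" and E: "hom_basis r deg (Suc m) E" and e: "e \<in> E"
    and z': "z' \<in> bd m" "homog_of r deg m (hdeg r deg (Suc m) e) z'" "supp B z' \<noteq> {}"
      "supp B z' \<subset> supp B (f m e)"
  obtains e' where "e' \<notin> E - {e}" "hom_basis r deg (Suc m) (insert e' (E - {e}))"
    "supp B (f m e') \<subset> supp B (f m e)"
proof -
  have BF: "is_basis (Fmod r m) B" and EF: "is_basis (Fmod r (Suc m)) E"
    using B E by (simp_all add: hom_basis_def)
  let ?a = "hdeg r deg (Suc m) e"
  have ea: "homog_of r deg (Suc m) ?a e" by (rule homog_of_hdeg) (use E e in \<open>auto simp: hom_basis_def\<close>)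
  have eF: "e \<in> Fmod r (Suc m)" using ea by (simp add: homog_of_def)
  have y: "f m e \<in> Fmod r m" "homog_of r deg m ?a (f m e)" using dif_in_Fmod homog_of_dif[OF ea] by auto
  obtain h where h: "homog_of r deg (Suc m) ?a h" "f m h = z'" using exists_hom_lift[OF z'(1,2)] .
  have hF: "h \<in> Fmod r (Suc m)" and z'F: "z' \<in> Fmod r m" using h(1) z'(2) by (simp_all add: homog_of_def)
  have "hom_poly 0 (coord E h e)" using hom_poly_coord[OF E h(1), of e] by simp
  then obtain \<kappa> where he: "coord E h e = Poly_Mapping.single 0 \<kappa>"
    using hom_poly_eq_single by fastforce
  show ?thesis
  proof (cases "\<kappa> = 0")
    case False
    have "Poly_Mapping.single 0 (inverse \<kappa>) * coord E h e = 1" using False by (simp add: he mult_single)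
    with hom_basis_exchange[OF E e] h z'(4) that show ?thesis by (metis homog_def)
  next
    case True
    obtain b where b: "b \<in> supp B z'" using z'(3) by blast
    define M where "M = monom_of_mdeg (?a - hdeg r deg m b)"
    define \<alpha> where "\<alpha> = Poly_Mapping.lookup (coord B (f m e) b) M"
    define \<beta> where "\<beta> = Poly_Mapping.lookup (coord B z' b) M"
    have zb: "coord B z' b = Poly_Mapping.single M \<beta>"
      using hom_poly_eq_single[OF hom_poly_coord[OF B z'(2)]] by (simp add: \<beta>_def M_def)
    have "\<beta> \<noteq> 0" using b zb by (auto simp: supp_def)
    then have cancel: "1 * coord B (f m e) b = Poly_Mapping.single 0 (\<alpha> / \<beta>) * coord B z' b"
      using hom_poly_eq_single[OF hom_poly_coord[OF B y(2)]] by (simp add: zb mult_single \<alpha>_def M_def)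
    define e' where "e' = smul 1 e - smul (Poly_Mapping.single 0 (\<alpha> / \<beta>)) h"
    have "homog_of r deg (Suc m) (?a + 0) (smul (Poly_Mapping.single 0 (\<alpha> / \<beta>)) h)"
      using homog_of_smul[OF h(1) hom_poly_single[of 0 "\<alpha> / \<beta>"]] by simp
    then have "homog_of r deg (Suc m) ?a e'"
      using homog_of_diff[OF ea] by (simp add: e'_def)
    moreover have "1 * coord E e' e = 1"
      using coord_smul_diff[OF EF eF hF, of 1] coord_basis_elem[OF EF e] by (simp add: e'_def he True)
    moreover have "supp B (f m e') \<subset> supp B (f m e)"
      using supp_smul_diff_cancel[OF BF y(1) z'F _ cancel] b z'(4)
      by (auto simp: e'_def dif_diff dif_smul h(2))
    ultimately show ?thesis using hom_basis_exchange[OF E e] that by (metis homog_def)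
  qed
qed

lemma hom_basis_reduce_supp:
  assumes B: "hom_basis r deg m B" and E: "hom_basis r deg (Suc m) E" and e: "e \<in> E"
    and nmin: "\<not> cycle_min_supp r A (\<lambda>_. B) m (f m e)"
  obtains e' where "e' \<notin> E - {e}" "hom_basis r deg (Suc m) (insert e' (E - {e}))"
    "supp B (f m e') \<subset> supp B (f m e)"
proof -
  let ?a = "hdeg r deg (Suc m) e"
  have ea: "homog_of r deg (Suc m) ?a e" by (rule homog_of_hdeg) (use E e in \<open>auto simp: hom_basis_def\<close>)
  have y: "f m e \<in> bd m" "homog_of r deg m ?a (f m e)"
    using ea homog_of_dif[OF ea] by (auto simp: bd_def homog_of_def)
  obtain z where "z \<in> bd m" "z \<noteq> 0" "supp B z \<subset> supp B (f m e)"
    using nmin y(1) kerf_eq_bd by (auto simp: cycle_min_supp_def)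
  then obtain z' where "z' \<in> bd m" "homog_of r deg m ?a z'" "supp B z' \<noteq> {}" "supp B z' \<subset> supp B (f m e)"
    using exists_hom_bd_smaller_supp[OF B y] by blast
  with hom_basis_exchange_smaller_bd[OF B E e] that show ?thesis by blast
qed

lemma exists_hom_basis_min_supp:
  assumes B: "hom_basis r deg m B"
  obtains E where "hom_basis r deg (Suc m) E" "\<forall>e\<in>E. cycle_min_supp r A (\<lambda>_. B) m (f m e)"
proof -
  have "\<exists>E'. hom_basis r deg (Suc m) E' \<and> (\<forall>e\<in>E'. cycle_min_supp r A (\<lambda>_. B) m (f m e))"
    if "finite E" "hom_basis r deg (Suc m) E" for E :: "(nat \<Rightarrow> ('v, 'k) pring) set"
    using that
  proof (induction E rule: measure_induct_rule[where f = "\<lambda>E. \<Sum>e\<in>E. card (supp B (f m e))"])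
    case (less E)
    show ?case
    proof (cases "\<forall>e\<in>E. cycle_min_supp r A (\<lambda>_. B) m (f m e)")
      case False
      then obtain e where e: "e \<in> E" "\<not> cycle_min_supp r A (\<lambda>_. B) m (f m e)" by blast
      obtain e' where e': "e' \<notin> E - {e}" "hom_basis r deg (Suc m) (insert e' (E - {e}))"
        "supp B (f m e') \<subset> supp B (f m e)"
        using hom_basis_reduce_supp[OF B less.prems(2) e] .
      have "card (supp B (f m e')) < card (supp B (f m e))"
        using e'(3) B by (intro psubset_card_mono finite_supp[OF _ dif_in_Fmod]) (auto simp: hom_basis_def)
      then have "(\<Sum>x\<in>insert e' (E - {e}). card (supp B (f m x))) < (\<Sum>x\<in>E. card (supp B (f m x)))"
        using less.prems(1) e(1) e'(1) by (simp add: sum.remove[of E e])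
      then show ?thesis using less.IH less.prems(1) e'(2) by blast
    qed (use less.prems in blast)
  qed
  then show ?thesis using that hom_basis_unit_vec by blast
qed

lemma exists_hom_bases_min_supp:
  assumes "hom_basis r deg 0 C"
  obtains B where "B 0 = C" "\<And>n. hom_basis r deg n (B n)"
    "\<And>n. \<forall>e\<in>B (Suc n). cycle_min_supp r A B n (f n e)"
proof -
  let ?P = "\<lambda>n X. hom_basis r deg n X \<and> (n = 0 \<longrightarrow> X = C)"
  let ?Q = "\<lambda>n X Y. \<forall>e\<in>Y. cycle_min_supp r A (\<lambda>_. X) n (f n e)"
  have "\<exists>Y. ?P (Suc n) Y \<and> ?Q n X Y" if "?P n X" for n X
    using exists_hom_basis_min_supp[of n X] that by blast
  then obtain B where B: "\<And>n. ?P n (B n) \<and> ?Q n (B n) (B (Suc n))"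
    using dependent_nat_choice[of ?P ?Q] assms by blast
  have cycle: "cycle_min_supp r A (\<lambda>_. B n) n = cycle_min_supp r A B n" for n
    by (simp add: cycle_min_supp_def fun_eq_iff)
  show ?thesis
  proof (rule that)
    show "B 0 = C" using B[of 0] by simp
    show "hom_basis r deg n (B n)" for n using B[of n] by simp
    show "\<forall>e\<in>B (Suc n). cycle_min_supp r A B n (f n e)" for n using B[of n] cycle[of n] by simp
  qed
qed

end

theorem mainTheorem6:
  fixes r :: "nat \<Rightarrow> nat"
    and deg :: "nat \<Rightarrow> nat \<Rightarrow> ('v::finite \<Rightarrow> int)"
    and A :: "nat \<Rightarrow> nat \<Rightarrow> nat \<Rightarrow> ('v, 'k::field) pring"
    and C :: "(nat \<Rightarrow> ('v, 'k) pring) set"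
  assumes "min_graded_free_resolution r deg A"
    and "H0_torsion_free r A"
    and "is_basis (Fmod r 0) C"
    and "\<forall>c\<in>C. homog r deg 0 c"
  shows "\<exists>B. basis_min_supp r A B \<and> (\<forall>n. \<forall>b\<in>B n. homog r deg n b) \<and> B 0 = C"
proof -
  interpret tf_min_resolution r deg A using assms(1,2) by unfold_locales
  have "hom_basis r deg 0 C" using assms(3,4) by (simp add: hom_basis_def)
  then obtain B where B: "B 0 = C" "\<And>n. hom_basis r deg n (B n)"
    "\<And>n. \<forall>e\<in>B (Suc n). cycle_min_supp r A B n (dif r A (Suc n) e)"
    using exists_hom_bases_min_supp by blast
  have "basis_min_supp r A B"
    unfolding basis_min_supp_def
  proof (intro conjI allI impI ballI)
    show "is_basis (Fmod r n) (B n)" for n using B(2) by (simp add: hom_basis_def)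
    fix n b assume "1 \<le> n" "b \<in> B n"
    then obtain m where "n = Suc m" "b \<in> B (Suc m)" by (cases n) auto
    then show "cycle_min_supp r A B (n - 1) (dif r A n b)" using B(3) by simp
  qed
  then show ?thesis using B(1,2) by (auto simp: hom_basis_def)
qed

end
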